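(* Let $G$ be a finite connected graph, fix an arbitrary orientation $\varepsilon$ of $G$ (the normal orientation) and a total order on $E(G)$. Then every Eulerian equivalence class of $\mathcal{BO}(G)$ contains exactly one reduced orientation.
   Context: An orientation assigns a direction to each edge. $\mathcal{BO}(G)$ is the set of orientations of $G$ with no nonempty directed cut, i.e. (for connected $G$) the totally cyclic orientations, in which every edge lies on a directed cycle. Two orientations $\varepsilon_1,\varepsilon_2$ are Eulerian equivalent if the spanning subgraph formed by the edges $\{e:\varepsilon_1(e)\neq\varepsilon_2(e)\}$, oriented by $\varepsilon_1$, has in-degree equal to out-degree at every vertex. Given the normal orientation $\varepsilon$ and the total order, an orientation $\varepsilon'$ is reduced if for every edge $e$, either $\varepsilon'(e)=\varepsilon(e)$, or there is no cycle that is directed with respect to $\varepsilon'$, contains $e$, and has all its other edges smaller than $e$. *)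

theory Defs
  imports Main
begin

(* A finite multigraph (loops and parallel edges allowed): vertex set V, edge set E,
   and ends e = (tail, head) of e in the fixed NORMAL orientation epsilon.
   An orientation is encoded by the set R \<subseteq> E of edges on which it differs from
   epsilon. *)

definition graph :: "'v set \<Rightarrow> 'e set \<Rightarrow> ('e \<Rightarrow> 'v \<times> 'v) \<Rightarrow> bool" where
  "graph V E ends \<longleftrightarrow> finite V \<and> finite E \<and>
     (\<forall>e\<in>E. fst (ends e) \<in> V \<and> snd (ends e) \<in> V)"

definition connected_graph :: "'v set \<Rightarrow> 'e set \<Rightarrow> ('e \<Rightarrow> 'v \<times> 'v) \<Rightarrow> bool" where
  "connected_graph V E ends \<longleftrightarrow>
     (\<forall>u\<in>V. \<forall>v\<in>V. (u, v) \<in> ({(a, b). \<exists>e\<in>E. ends e = (a, b) \<or> ends e = (b, a)})\<^sup>*)"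

definition arc :: "('e \<Rightarrow> 'v \<times> 'v) \<Rightarrow> 'e set \<Rightarrow> 'e \<Rightarrow> 'v \<times> 'v" where
  "arc ends R e = (if e \<in> R then (snd (ends e), fst (ends e)) else ends e)"

definition orientations :: "'e set \<Rightarrow> 'e set set" where
  "orientations E = {R. R \<subseteq> E}"

definition has_nonempty_dcut :: "'v set \<Rightarrow> 'e set \<Rightarrow> ('e \<Rightarrow> 'v \<times> 'v) \<Rightarrow> 'e set \<Rightarrow> bool" where
  "has_nonempty_dcut V E ends R \<longleftrightarrow>
     (\<exists>S \<subseteq> V.
        (let cut = {e\<in>E. (fst (ends e) \<in> S) \<noteq> (snd (ends e) \<in> S)} in
          cut \<noteq> {} \<and> (\<forall>e\<in>cut. fst (arc ends R e) \<in> S \<and> snd (arc ends R e) \<notin> S)))"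

definition BO :: "'v set \<Rightarrow> 'e set \<Rightarrow> ('e \<Rightarrow> 'v \<times> 'v) \<Rightarrow> 'e set set" where
  "BO V E ends = {R \<in> orientations E. \<not> has_nonempty_dcut V E ends R}"

definition eulerian_equiv :: "'v set \<Rightarrow> 'e set \<Rightarrow> ('e \<Rightarrow> 'v \<times> 'v) \<Rightarrow> 'e set \<Rightarrow> 'e set \<Rightarrow> bool" where
  "eulerian_equiv V E ends R1 R2 \<longleftrightarrow>
     (let D = {e\<in>E. (e \<in> R1) \<noteq> (e \<in> R2)} in
       \<forall>v\<in>V. card {e\<in>D. fst (arc ends R1 e) = v} = card {e\<in>D. snd (arc ends R1 e) = v})"

definition dcycle :: "'e set \<Rightarrow> ('e \<Rightarrow> 'v \<times> 'v) \<Rightarrow> 'e set \<Rightarrow> 'e list \<Rightarrow> bool" where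
  "dcycle E ends R es \<longleftrightarrow> es \<noteq> [] \<and> set es \<subseteq> E \<and> distinct es \<and>
     distinct (map (\<lambda>e. fst (arc ends R e)) es) \<and>
     (\<forall>i<length es. snd (arc ends R (es ! i)) = fst (arc ends R (es ! ((i + 1) mod length es))))"

definition reduced :: "'e set \<Rightarrow> ('e \<Rightarrow> 'v \<times> 'v) \<Rightarrow> ('e \<Rightarrow> 'e \<Rightarrow> bool) \<Rightarrow> 'e set \<Rightarrow> bool" where
  "reduced E ends lt R \<longleftrightarrow>
     (\<forall>e\<in>E. e \<notin> R \<or>
        \<not> (\<exists>es. dcycle E ends R es \<and> e \<in> set es \<and> (\<forall>f\<in>set es. f \<noteq> e \<longrightarrow> lt f e)))"

definition strict_total_order_on :: "'e set \<Rightarrow> ('e \<Rightarrow> 'e \<Rightarrow> bool) \<Rightarrow> bool" where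
  "strict_total_order_on E lt \<longleftrightarrow>
     (\<forall>x\<in>E. \<not> lt x x) \<and>
     (\<forall>x\<in>E. \<forall>y\<in>E. \<forall>z\<in>E. lt x y \<longrightarrow> lt y z \<longrightarrow> lt x z) \<and>
     (\<forall>x\<in>E. \<forall>y\<in>E. x \<noteq> y \<longrightarrow> lt x y \<or> lt y x)"

end

theory Submission
  imports Defs
begin

(* The proof rests on three facts about the set D of edges where two orientations differ:
   (1) Eulerian equivalence is an equivalence relation, since it says that R1 and R2 have
       the same out-degree minus in-degree at every vertex;
   (2) equivalent orientations have the same net flow across every vertex set S, hence
       directed cuts are preserved and BO(G) is a union of equivalence classes;
   (3) a balanced set of arcs contains a directed cycle through each of its arcs, and
       reversing a directed cycle yields an equivalent orientation.
   Existence: give edge e the weight 2^(rank of e) and take an orientation of minimum total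
   weight in the class; if it violated reducedness, reversing the offending cycle would
   lower the weight.  Uniqueness: if two reduced orientations in the class differ, the
   largest edge where they differ lies on a directed cycle inside D, contradicting
   reducedness of the one in which this edge is reversed. *)


section \<open>Directed walks\<close>

fun dpath :: "('e \<Rightarrow> 'v) \<Rightarrow> ('e \<Rightarrow> 'v) \<Rightarrow> 'e list \<Rightarrow> 'v \<Rightarrow> 'v \<Rightarrow> bool" where
  "dpath t h [] u w = (u = w)"
| "dpath t h (f # fs) u w = (t f = u \<and> dpath t h fs (h f) w)"

lemma dpath_append: "dpath t h (xs @ ys) u w \<longleftrightarrow> (\<exists>m. dpath t h xs u m \<and> dpath t h ys m w)"
  by (induction xs arbitrary: u) auto

lemma dpath_nth: "dpath t h fs u w \<Longrightarrow> Suc i < length fs \<Longrightarrow> h (fs ! i) = t (fs ! Suc i)"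
proof (induction fs arbitrary: u i)
  case (Cons f fs)
  then show ?case by (cases fs; cases i) auto
qed simp

lemma dpath_hd: "dpath t h fs u w \<Longrightarrow> fs \<noteq> [] \<Longrightarrow> t (hd fs) = u"
  by (cases fs) auto

lemma dpath_last: "dpath t h fs u w \<Longrightarrow> fs \<noteq> [] \<Longrightarrow> h (last fs) = w"
proof (induction fs arbitrary: u)
  case (Cons f fs)
  then show ?case by (cases fs) auto
qed simp

lemma dpath_split:
  assumes "dpath t h fs u w" "i < length fs"
  shows "dpath t h (take i fs) u (t (fs ! i)) \<and> dpath t h (drop i fs) (t (fs ! i)) w"
proof -
  obtain m where m: "dpath t h (take i fs) u m" "dpath t h (drop i fs) m w"
    using assms(1) dpath_append[of t h "take i fs" "drop i fs"] by auto
  have "m = t (fs ! i)"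
    using dpath_hd[OF m(2)] assms(2) by (simp add: hd_drop_conv_nth)
  then show ?thesis using m by simp
qed

lemma dpath_shortcut:
  assumes walk: "dpath t h fs u w" and not_simple: "\<not> (distinct (map t fs) \<and> w \<notin> t ` set fs)"
  shows "\<exists>gs. dpath t h gs u w \<and> set gs \<subseteq> set fs \<and> length gs < length fs"
proof (cases "distinct (map t fs)")
  case False
  then obtain i j where "i < length fs" "j < length fs" "i \<noteq> j" "t (fs ! i) = t (fs ! j)"
    by (auto simp: distinct_conv_nth)
  then obtain i j where ij: "i < j" "j < length fs" "t (fs ! i) = t (fs ! j)"
    by (metis linorder_neqE_nat)
  let ?gs = "take i fs @ drop j fs"
  have "dpath t h (take i fs) u (t (fs ! i))" "dpath t h (drop j fs) (t (fs ! j)) w"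
    using dpath_split[OF walk, of i] dpath_split[OF walk, of j] ij by auto
  then have "dpath t h ?gs u w" unfolding dpath_append using ij(3) by auto
  moreover have "set ?gs \<subseteq> set fs" by (auto dest: in_set_takeD in_set_dropD)
  ultimately show ?thesis using ij by (intro exI[of _ ?gs]) auto
next
  case True
  then obtain i where i: "i < length fs" "w = t (fs ! i)"
    using not_simple by (auto simp: in_set_conv_nth)
  then have "dpath t h (take i fs) u w" using dpath_split[OF walk] by simp
  then show ?thesis using i by (intro exI[of _ "take i fs"]) (auto simp: set_take_subset)
qed

lemma dpath_distinct:
  "dpath t h fs u w \<Longrightarrow>
     \<exists>gs. dpath t h gs u w \<and> set gs \<subseteq> set fs \<and> distinct (map t gs) \<and> w \<notin> t ` set gs"
proof (induction "length fs" arbitrary: fs rule: less_induct)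
  case less
  show ?case
  proof (cases "distinct (map t fs) \<and> w \<notin> t ` set fs")
    case False
    then obtain gs where gs: "dpath t h gs u w" "set gs \<subseteq> set fs" "length gs < length fs"
      using dpath_shortcut[OF less.prems] by blast
    then show ?thesis using less.hyps[OF gs(3,1)] by blast
  qed (use less.prems in blast)
qed

lemma path_closes_cycle:
  assumes path: "dpath t h gs (h e) (t e)" "distinct (map t gs)" "t e \<notin> t ` set gs"
  defines "es \<equiv> e # gs"
  shows "distinct (map t es) \<and> (\<forall>i<length es. h (es ! i) = t (es ! ((i + 1) mod length es)))"
proof -
  have "h (es ! i) = t (es ! ((i + 1) mod length es))" if i: "i < length es" for i
  proof (cases "i = length gs")
    case True
    then have "(i + 1) mod length es = 0" by (simp add: es_def)
    moreover have "h (es ! length gs) = t e"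
    proof (cases "gs = []")
      case False
      then show ?thesis using dpath_last[OF path(1)] by (simp add: es_def last_conv_nth)
    qed (use path(1) in \<open>simp add: es_def\<close>)
    ultimately show ?thesis using True by (simp add: es_def)
  next
    case False
    then have i_succ: "(i + 1) mod length es = Suc i" "Suc i < length es" using i by (auto simp: es_def)
    show ?thesis
    proof (cases i)
      case 0
      then have "gs \<noteq> []" using i_succ by (auto simp: es_def)
      then show ?thesis using 0 i_succ dpath_hd[OF path(1)] by (simp add: es_def hd_conv_nth)
    next
      case (Suc k)
      then show ?thesis using i_succ dpath_nth[OF path(1), of k] by (simp add: es_def)
    qed
  qed
  then show ?thesis using path(2,3) by (simp add: es_def)
qed


section \<open>Balanced arc sets\<close>

lemma card_by_fibres:
  assumes "finite S" "finite D"
  shows "card {f\<in>D. g f \<in> S} = (\<Sum>v\<in>S. card {f\<in>D. g f = v})"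
proof -
  have "(\<Sum>v\<in>S. card {f\<in>D. g f = v}) = (\<Sum>v\<in>S. card {x\<in>{f\<in>D. g f \<in> S}. g x = v})"
    by (intro sum.cong refl arg_cong[where f=card]) auto
  also have "\<dots> = (\<Sum>v\<in>S. \<Sum>x\<in>{x\<in>{f\<in>D. g f \<in> S}. g x = v}. 1)" by simp
  also have "\<dots> = (\<Sum>x\<in>{f\<in>D. g f \<in> S}. 1)"
    by (rule sum.group) (use assms in auto)
  finally show ?thesis by simp
qed

lemma balanced_closed_set:
  assumes finV: "finite V" and finD: "finite D" and SV: "S \<subseteq> V"
    and bal: "\<forall>v\<in>V. card {f\<in>D. t f = v} = card {f\<in>D. h f = v}"
    and closed: "\<forall>f\<in>D. t f \<in> S \<longrightarrow> h f \<in> S"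
  shows "\<forall>f\<in>D. h f \<in> S \<longrightarrow> t f \<in> S"
proof -
  have finS: "finite S" using SV finV finite_subset by blast
  have "(\<Sum>v\<in>S. card {f\<in>D. t f = v}) = (\<Sum>v\<in>S. card {f\<in>D. h f = v})"
    using bal SV by (intro sum.cong) auto
  then have same_card: "card {f\<in>D. t f \<in> S} = card {f\<in>D. h f \<in> S}"
    by (simp add: card_by_fibres[OF finS finD])
  have "{f\<in>D. t f \<in> S} \<subseteq> {f\<in>D. h f \<in> S}" using closed by blast
  then have "{f\<in>D. t f \<in> S} = {f\<in>D. h f \<in> S}"
    using card_subset_eq[OF _ _ same_card] finD by simp
  then show ?thesis by blast
qed

lemma balanced_cycle:
  assumes finV: "finite V" and finD: "finite D"
    and inV: "\<forall>f\<in>D. t f \<in> V \<and> h f \<in> V"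
    and bal: "\<forall>v\<in>V. card {f\<in>D. t f = v} = card {f\<in>D. h f = v}"
    and e: "e \<in> D"
  shows "\<exists>es. es \<noteq> [] \<and> set es \<subseteq> D \<and> distinct es \<and> distinct (map t es) \<and>
     (\<forall>i<length es. h (es ! i) = t (es ! ((i + 1) mod length es))) \<and> e \<in> set es"
proof -
  define S where "S = {v. \<exists>fs. set fs \<subseteq> D - {e} \<and> dpath t h fs (h e) v}"
  have heS: "h e \<in> S" unfolding S_def by (intro CollectI exI[of _ "[]"]) simp
  have SV: "S \<subseteq> V"
  proof
    fix v assume "v \<in> S"
    then obtain fs where fs: "set fs \<subseteq> D - {e}" "dpath t h fs (h e) v" unfolding S_def by blast
    show "v \<in> V"
    proof (cases "fs = []")
      case False
      then have "last fs \<in> D" using fs(1) last_in_set by blast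
      then show ?thesis using dpath_last[OF fs(2) False] inV by blast
    qed (use fs inV e in auto)
  qed
  have "t e \<in> S"
  proof (rule ccontr)
    assume teS: "t e \<notin> S"
    have "h f \<in> S" if f: "f \<in> D" "t f \<in> S" for f
    proof -
      obtain fs where fs: "set fs \<subseteq> D - {e}" "dpath t h fs (h e) (t f)"
        using f(2) unfolding S_def by blast
      have "f \<noteq> e" using f teS by blast
      then have "set (fs @ [f]) \<subseteq> D - {e}" using fs(1) f(1) by auto
      moreover have "dpath t h (fs @ [f]) (h e) (h f)" using fs(2) by (auto simp: dpath_append)
      ultimately show ?thesis unfolding S_def by blast
    qed
    then show False using balanced_closed_set[OF finV finD SV bal] e heS teS by blast
  qed
  then obtain fs where fs: "set fs \<subseteq> D - {e}" "dpath t h fs (h e) (t e)" unfolding S_def by blast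
  then obtain gs where gs: "dpath t h gs (h e) (t e)" "set gs \<subseteq> D - {e}"
      "distinct (map t gs)" "t e \<notin> t ` set gs"
    using dpath_distinct[OF fs(2)] fs(1) by blast
  have cyc: "distinct (map t (e # gs)) \<and>
      (\<forall>i<length (e # gs). h ((e # gs) ! i) = t ((e # gs) ! ((i + 1) mod length (e # gs))))"
    using path_closes_cycle[OF gs(1,3,4)] by blast
  then have "distinct (e # gs)" using distinct_map by blast
  moreover have "set (e # gs) \<subseteq> D" using gs(2) e by auto
  ultimately show ?thesis using cyc by (intro exI[of _ "e # gs"]) simp
qed

lemma card_fibre_inj:
  assumes "inj_on g A"
  shows "card {f\<in>A. g f = v} = (if v \<in> g ` A then 1 else 0)"
proof (cases "v \<in> g ` A")
  case True
  then obtain a where "a \<in> A" "g a = v" by blast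
  then have "{f\<in>A. g f = v} = {a}" using assms by (auto simp: inj_on_def)
  then show ?thesis using True by simp
next
  case False
  then have empty: "{f\<in>A. g f = v} = {}" by auto
  show ?thesis unfolding empty using False by simp
qed

(* conversely, a directed cycle is balanced: heads are the tails rotated by one *)
lemma cycle_balanced:
  assumes "distinct (map t es)" "\<forall>i<length es. h (es ! i) = t (es ! ((i + 1) mod length es))"
  shows "card {f\<in>set es. t f = v} = card {f\<in>set es. h f = v}"
proof -
  have rot: "map h es = rotate 1 (map t es)"
    by (rule nth_equalityI)
      (use assms(2) in \<open>auto simp: nth_rotate1 intro!: nth_map[symmetric] mod_less_divisor\<close>)
  then have "distinct (map h es)" using assms(1) by simp
  then have "inj_on t (set es)" "inj_on h (set es)" using assms(1) distinct_map by auto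
  moreover have "h ` set es = t ` set es" using arg_cong[OF rot, of set] by simp
  ultimately show ?thesis using card_fibre_inj[of t "set es" v] card_fibre_inj[of h "set es" v] by simp
qed


section \<open>Eulerian equivalence via degrees\<close>

definition outd :: "'e set \<Rightarrow> ('e \<Rightarrow> 'v \<times> 'v) \<Rightarrow> 'e set \<Rightarrow> 'v \<Rightarrow> nat" where
  "outd E ends R v = card {e\<in>E. fst (arc ends R e) = v}"

definition ind :: "'e set \<Rightarrow> ('e \<Rightarrow> 'v \<times> 'v) \<Rightarrow> 'e set \<Rightarrow> 'v \<Rightarrow> nat" where
  "ind E ends R v = card {e\<in>E. snd (arc ends R e) = v}"

lemma arc_diff: "(e \<in> R1) \<noteq> (e \<in> R2) \<Longrightarrow>
    fst (arc ends R2 e) = snd (arc ends R1 e) \<and> snd (arc ends R2 e) = fst (arc ends R1 e)"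
  unfolding arc_def by auto

lemma arc_same: "(e \<in> R1) = (e \<in> R2) \<Longrightarrow> arc ends R2 e = arc ends R1 e"
  unfolding arc_def by auto

lemma card_split:
  assumes "finite E"
  shows "card {e\<in>E. P e} = card {e\<in>{e\<in>E. Q e}. P e} + card {e\<in>E. \<not> Q e \<and> P e}"
proof -
  have "{e\<in>E. P e} = {e\<in>{e\<in>E. Q e}. P e} \<union> {e\<in>E. \<not> Q e \<and> P e}" by auto
  then show ?thesis using assms by (simp add: card_Un_disjoint disjoint_iff)
qed

(* balance of the difference set at v, in terms of the degrees of R1 and R2 at v:
   split the degrees into arcs inside and outside D; outside D the orientations
   agree, inside D the out-arcs of R2 are the in-arcs of R1 *)
lemma balance_at_vertex:
  fixes R1 R2 :: "'e set"
  assumes "finite E"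
  defines "D \<equiv> {e\<in>E. (e \<in> R1) \<noteq> (e \<in> R2)}"
  shows "card {e\<in>D. fst (arc ends R1 e) = v} = card {e\<in>D. snd (arc ends R1 e) = v}
     \<longleftrightarrow> outd E ends R1 v + ind E ends R2 v = outd E ends R2 v + ind E ends R1 v"
proof -
  let ?Q = "\<lambda>e. (e \<in> R1) \<noteq> (e \<in> R2)"
  have split: "card {e\<in>E. P e} = card {e\<in>D. P e} + card {e\<in>E. \<not> ?Q e \<and> P e}" for P
    unfolding D_def by (rule card_split[OF assms(1)])
  have inside: "{e\<in>D. fst (arc ends R2 e) = v} = {e\<in>D. snd (arc ends R1 e) = v}"
      "{e\<in>D. snd (arc ends R2 e) = v} = {e\<in>D. fst (arc ends R1 e) = v}"
    unfolding D_def using arc_diff[of _ R1 R2 ends] by auto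
  have outside: "{e\<in>E. \<not> ?Q e \<and> P (arc ends R2 e)} = {e\<in>E. \<not> ?Q e \<and> P (arc ends R1 e)}" for P
    using arc_same[of _ R1 R2 ends] by auto
  show ?thesis
    unfolding outd_def ind_def split[of "\<lambda>e. fst (arc ends _ e) = v"]
      split[of "\<lambda>e. snd (arc ends _ e) = v"] inside
      outside[of "\<lambda>a. fst a = v"] outside[of "\<lambda>a. snd a = v"] by arith
qed

lemma eulerian_equiv_degrees:
  assumes "finite E"
  shows "eulerian_equiv V E ends R1 R2 \<longleftrightarrow>
    (\<forall>v\<in>V. outd E ends R1 v + ind E ends R2 v = outd E ends R2 v + ind E ends R1 v)"
  unfolding eulerian_equiv_def Let_def by (rule ball_cong[OF refl balance_at_vertex[OF assms]])

lemma eulerian_equiv_refl: "eulerian_equiv V E ends R R"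
  unfolding eulerian_equiv_def Let_def by simp

lemma eulerian_equiv_sym:
  assumes "finite E" "eulerian_equiv V E ends R1 R2"
  shows "eulerian_equiv V E ends R2 R1"
proof -
  have h: "\<forall>v\<in>V. outd E ends R1 v + ind E ends R2 v = outd E ends R2 v + ind E ends R1 v"
    using assms(2) unfolding eulerian_equiv_degrees[OF assms(1)] .
  show ?thesis unfolding eulerian_equiv_degrees[OF assms(1)]
  proof
    fix v assume "v \<in> V"
    with h have "outd E ends R1 v + ind E ends R2 v = outd E ends R2 v + ind E ends R1 v" by (rule bspec)
    then show "outd E ends R2 v + ind E ends R1 v = outd E ends R1 v + ind E ends R2 v" by (rule sym)
  qed
qed

lemma eulerian_equiv_trans:
  assumes finE: "finite E" and eq12: "eulerian_equiv V E ends R1 R2"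
    and eq23: "eulerian_equiv V E ends R2 R3"
  shows "eulerian_equiv V E ends R1 R3"
proof -
  have h12: "\<forall>v\<in>V. outd E ends R1 v + ind E ends R2 v = outd E ends R2 v + ind E ends R1 v"
    using eq12 unfolding eulerian_equiv_degrees[OF finE] .
  have h23: "\<forall>v\<in>V. outd E ends R2 v + ind E ends R3 v = outd E ends R3 v + ind E ends R2 v"
    using eq23 unfolding eulerian_equiv_degrees[OF finE] .
  have "\<forall>v\<in>V. outd E ends R1 v + ind E ends R3 v = outd E ends R3 v + ind E ends R1 v"
  proof
    fix v assume "v \<in> V"
    then have "outd E ends R1 v + ind E ends R2 v = outd E ends R2 v + ind E ends R1 v"
      and "outd E ends R2 v + ind E ends R3 v = outd E ends R3 v + ind E ends R2 v"
      using h12 h23 by simp_all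
    then show "outd E ends R1 v + ind E ends R3 v = outd E ends R3 v + ind E ends R1 v" by linarith
  qed
  then show ?thesis unfolding eulerian_equiv_degrees[OF finE] .
qed

lemma reverse_cycle_equiv:
  assumes cyc: "dcycle E ends R es"
  shows "eulerian_equiv V E ends R ((R - set es) \<union> (set es - R))"
proof -
  have D: "{f\<in>E. (f \<in> R) \<noteq> (f \<in> (R - set es) \<union> (set es - R))} = set es"
    using cyc unfolding dcycle_def by auto
  have "distinct (map (\<lambda>f. fst (arc ends R f)) es)"
    "\<forall>i<length es. snd (arc ends R (es ! i)) = fst (arc ends R (es ! ((i + 1) mod length es)))"
    using cyc unfolding dcycle_def by simp_all
  then have "card {f\<in>set es. fst (arc ends R f) = v} = card {f\<in>set es. snd (arc ends R f) = v}" for v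
    by (rule cycle_balanced)
  then show ?thesis unfolding eulerian_equiv_def Let_def D by blast
qed


section \<open>Directed cuts are invariant under Eulerian equivalence\<close>

definition leaving :: "'e set \<Rightarrow> ('e \<Rightarrow> 'v \<times> 'v) \<Rightarrow> 'e set \<Rightarrow> 'v set \<Rightarrow> 'e set" where
  "leaving E ends R S = {e\<in>E. fst (arc ends R e) \<in> S \<and> snd (arc ends R e) \<notin> S}"

lemma arc_crosses:
  "(fst (ends e) \<in> S) \<noteq> (snd (ends e) \<in> S) \<longleftrightarrow> (fst (arc ends R e) \<in> S) \<noteq> (snd (arc ends R e) \<in> S)"
  unfolding arc_def by auto

(* arcs with tail in S are the arcs inside S plus those leaving S; dually for heads,
   using that the arcs entering S are the arcs leaving the complement *)
lemma card_tails_in: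
  assumes "finite E"
  shows "card {e\<in>E. fst (arc ends R e) \<in> S} =
      card {e\<in>E. fst (ends e) \<in> S \<and> snd (ends e) \<in> S} + card (leaving E ends R S)"
    and "card {e\<in>E. snd (arc ends R e) \<in> S} =
      card {e\<in>E. fst (ends e) \<in> S \<and> snd (ends e) \<in> S} + card (leaving E ends R (- S))"
proof -
  let ?inside = "{e\<in>E. fst (ends e) \<in> S \<and> snd (ends e) \<in> S}"
  have fin: "finite ?inside" "finite (leaving E ends R T)" for T
    using assms unfolding leaving_def by simp_all
  have "{e\<in>E. fst (arc ends R e) \<in> S} = ?inside \<union> leaving E ends R S"
       "{e\<in>E. snd (arc ends R e) \<in> S} = ?inside \<union> leaving E ends R (- S)"
    unfolding leaving_def arc_def by auto
  moreover have "?inside \<inter> leaving E ends R S = {}" "?inside \<inter> leaving E ends R (- S) = {}"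
    unfolding leaving_def arc_def by auto
  ultimately show "card {e\<in>E. fst (arc ends R e) \<in> S} = card ?inside + card (leaving E ends R S)"
    and "card {e\<in>E. snd (arc ends R e) \<in> S} = card ?inside + card (leaving E ends R (- S))"
    using fin by (simp_all add: card_Un_disjoint)
qed

(* summing the degree identity over S: equivalent orientations have the same net flow out of S *)
lemma equiv_net_flow:
  assumes finV: "finite V" and finE: "finite E" and SV: "S \<subseteq> V"
    and eq: "eulerian_equiv V E ends R1 R2"
  shows "card (leaving E ends R1 S) + card (leaving E ends R2 (- S)) =
         card (leaving E ends R2 S) + card (leaving E ends R1 (- S))"
proof -
  have finS: "finite S" using SV finV finite_subset by blast
  (* the degree sum over S counts arcs inside S once as tails and once as heads *)
  have flow: "(\<Sum>v\<in>S. outd E ends R v + ind E ends R' v) =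
      2 * card {e\<in>E. fst (ends e) \<in> S \<and> snd (ends e) \<in> S} +
      card (leaving E ends R S) + card (leaving E ends R' (- S))" for R R'
  proof -
    have "(\<Sum>v\<in>S. outd E ends R v) = card {e\<in>E. fst (arc ends R e) \<in> S}"
         "(\<Sum>v\<in>S. ind E ends R' v) = card {e\<in>E. snd (arc ends R' e) \<in> S}"
      unfolding outd_def ind_def by (simp_all only: card_by_fibres[OF finS finE])
    then show ?thesis unfolding sum.distrib card_tails_in[OF finE] by simp
  qed
  have "(\<Sum>v\<in>S. outd E ends R1 v + ind E ends R2 v) = (\<Sum>v\<in>S. outd E ends R2 v + ind E ends R1 v)"
    using eq SV unfolding eulerian_equiv_degrees[OF finE] by (intro sum.cong) auto
  then show ?thesis unfolding flow by simp
qed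

(* a nonempty directed cut S of R2 is one for R1 too: no arc of R2 enters S, so by the
   net flow identity none of R1 does either *)
lemma dcut_transfer:
  assumes g: "graph V E ends" and eq: "eulerian_equiv V E ends R1 R2"
    and cut2: "has_nonempty_dcut V E ends R2"
  shows "has_nonempty_dcut V E ends R1"
proof -
  have finV: "finite V" and finE: "finite E" using g unfolding graph_def by auto
  obtain S where S: "S \<subseteq> V"
    and cut_ne: "{e\<in>E. (fst (ends e) \<in> S) \<noteq> (snd (ends e) \<in> S)} \<noteq> {}"
    and cut_dir: "\<forall>e\<in>{e\<in>E. (fst (ends e) \<in> S) \<noteq> (snd (ends e) \<in> S)}.
        fst (arc ends R2 e) \<in> S \<and> snd (arc ends R2 e) \<notin> S"
    using cut2 unfolding has_nonempty_dcut_def Let_def by blast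
  define cut where "cut = {e\<in>E. (fst (ends e) \<in> S) \<noteq> (snd (ends e) \<in> S)}"
  have cut_dir2: "\<forall>e\<in>cut. fst (arc ends R2 e) \<in> S" using cut_dir unfolding cut_def by blast
  have cut_parts: "cut = leaving E ends R S \<union> leaving E ends R (- S)"
    "leaving E ends R S \<inter> leaving E ends R (- S) = {}" for R
    unfolding cut_def leaving_def arc_crosses[of ends _ S R] by blast+
  have fin_leaving: "finite (leaving E ends R T)" for R T
    unfolding leaving_def using finE by simp
  have card_cut: "card cut = card (leaving E ends R S) + card (leaving E ends R (- S))" for R
    unfolding cut_parts(1)[of R] by (rule card_Un_disjoint[OF fin_leaving fin_leaving cut_parts(2)])
  have "leaving E ends R2 (- S) \<subseteq> cut" using cut_parts(1)[of R2] by blast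
  then have "leaving E ends R2 (- S) = {}" using cut_dir2 unfolding leaving_def by blast
  then have "card (leaving E ends R1 (- S)) = 0"
    using equiv_net_flow[OF finV finE S eq] card_cut[of R1] card_cut[of R2] by simp
  then have "leaving E ends R1 (- S) = {}" using fin_leaving by simp
  then have "cut = leaving E ends R1 S" using cut_parts(1)[of R1] by simp
  then have "\<forall>e\<in>cut. fst (arc ends R1 e) \<in> S \<and> snd (arc ends R1 e) \<notin> S"
    unfolding leaving_def by blast
  then show ?thesis unfolding has_nonempty_dcut_def Let_def using S cut_ne cut_def by blast
qed

lemma BO_closed_equiv:
  assumes "graph V E ends" "R \<in> BO V E ends" "eulerian_equiv V E ends R R'" "R' \<subseteq> E"
  shows "R' \<in> BO V E ends"
  using assms dcut_transfer unfolding BO_def orientations_def by blast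


section \<open>Binary weights of edge sets\<close>

definition rank :: "'e set \<Rightarrow> ('e \<Rightarrow> 'e \<Rightarrow> bool) \<Rightarrow> 'e \<Rightarrow> nat" where
  "rank E lt e = card {f\<in>E. lt f e}"

(* weight of a set of reversed edges; a larger edge outweighs all smaller ones together *)
definition weight :: "'e set \<Rightarrow> ('e \<Rightarrow> 'e \<Rightarrow> bool) \<Rightarrow> 'e set \<Rightarrow> nat" where
  "weight E lt R = (\<Sum>e\<in>R. 2 ^ rank E lt e)"

lemma rank_less:
  assumes "finite E" "strict_total_order_on E lt" "f \<in> E" "e \<in> E" "lt f e"
  shows "rank E lt f < rank E lt e"
proof -
  have "{g\<in>E. lt g f} \<subset> {g\<in>E. lt g e}"
    using assms unfolding strict_total_order_on_def by blast
  then show ?thesis unfolding rank_def using assms(1) by (simp add: psubset_card_mono)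
qed

lemma rank_inj:
  assumes "finite E" "strict_total_order_on E lt"
  shows "inj_on (rank E lt) E"
proof (rule inj_onI)
  fix x y assume "x \<in> E" "y \<in> E" "rank E lt x = rank E lt y"
  then show "x = y"
    using assms rank_less[OF assms] unfolding strict_total_order_on_def by (metis less_irrefl)
qed

lemma weight_below:
  assumes "finite E" "strict_total_order_on E lt" "e \<in> E" "X \<subseteq> {f\<in>E. lt f e}"
  shows "weight E lt X < 2 ^ rank E lt e"
proof -
  have inj: "inj_on (rank E lt) X" using rank_inj[OF assms(1,2)] assms(4) inj_on_subset by blast
  have "weight E lt X = (\<Sum>k\<in>rank E lt ` X. 2 ^ k)"
    unfolding weight_def using sum.reindex[OF inj, of "\<lambda>k. (2::nat) ^ k"] by simp
  also have "\<dots> \<le> (\<Sum>k<rank E lt e. 2 ^ k)"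
    by (rule sum_mono2) (use assms rank_less[OF assms(1,2)] in auto)
  also have "\<dots> < 2 ^ rank E lt e" by (simp add: lessThan_atLeast0 sum_power2)
  finally show ?thesis .
qed

lemma weight_flip_less:
  assumes finE: "finite E" and sto: "strict_total_order_on E lt" and RE: "R \<subseteq> E"
    and FE: "F \<subseteq> E" and e: "e \<in> R" "e \<in> F" and below: "\<forall>f\<in>F. f \<noteq> e \<longrightarrow> lt f e"
  shows "weight E lt ((R - F) \<union> (F - R)) < weight E lt R"
proof -
  have finR: "finite R" using RE finE finite_subset by blast
  have "weight E lt R = weight E lt (R - F) + weight E lt (R \<inter> F)"
    unfolding weight_def using sum.Int_Diff[OF finR, of _ F] by (simp add: add.commute)
  moreover have "weight E lt ((R - F) \<union> (F - R)) = weight E lt (R - F) + weight E lt (F - R)"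
    unfolding weight_def using finR finE FE
    by (intro sum.union_disjoint) (auto intro: finite_subset)
  moreover have "2 ^ rank E lt e \<le> weight E lt (R \<inter> F)"
    unfolding weight_def using e finR by (intro member_le_sum) auto
  moreover have "weight E lt (F - R) < 2 ^ rank E lt e"
    using below FE e RE by (intro weight_below[OF finE sto]) auto
  ultimately show ?thesis by linarith
qed


section \<open>Existence and uniqueness of the reduced representative\<close>

(* a minimum-weight orientation of the class is reduced *)
lemma reduced_exists:
  assumes g: "graph V E ends" and sto: "strict_total_order_on E lt" and RBO: "R \<in> BO V E ends"
  shows "\<exists>R'. R' \<in> BO V E ends \<and> eulerian_equiv V E ends R R' \<and> reduced E ends lt R'"
proof -
  have finE: "finite E" using g unfolding graph_def by simp
  define P where "P Q \<longleftrightarrow> Q \<in> BO V E ends \<and> eulerian_equiv V E ends R Q" for Q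
  have "P R" unfolding P_def using RBO eulerian_equiv_refl by simp
  then obtain R' where PR': "P R'" and min: "\<And>Q. P Q \<Longrightarrow> weight E lt R' \<le> weight E lt Q"
    using ex_has_least_nat[of P R "weight E lt"] by blast
  have R'E: "R' \<subseteq> E" using PR' unfolding P_def BO_def orientations_def by simp
  have "reduced E ends lt R'"
  proof (rule ccontr)
    assume "\<not> reduced E ends lt R'"
    then obtain e es where "e \<in> R'" and cyc: "dcycle E ends R' es" and "e \<in> set es"
      and below: "\<forall>f\<in>set es. f \<noteq> e \<longrightarrow> lt f e"
      unfolding reduced_def by blast
    define R'' where "R'' = (R' - set es) \<union> (set es - R')"
    have esE: "set es \<subseteq> E" using cyc unfolding dcycle_def by simp
    have "eulerian_equiv V E ends R R''"
      using PR' reverse_cycle_equiv[OF cyc] eulerian_equiv_trans[OF finE]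
      unfolding P_def R''_def by blast
    moreover have "R'' \<subseteq> E" using R'E esE unfolding R''_def by blast
    ultimately have "P R''" unfolding P_def using BO_closed_equiv[OF g RBO] by blast
    moreover have "weight E lt R'' < weight E lt R'"
      unfolding R''_def
      using weight_flip_less[OF finE sto R'E esE] \<open>e \<in> R'\<close> \<open>e \<in> set es\<close> below by blast
    ultimately show False using min by fastforce
  qed
  then show ?thesis using PR' unfolding P_def by blast
qed

lemma largest_element:
  assumes "finite E" "strict_total_order_on E lt" "D \<subseteq> E" "D \<noteq> {}"
  obtains e where "e \<in> D" "\<forall>f\<in>D. f \<noteq> e \<longrightarrow> lt f e"
proof -
  have finD: "finite D" using assms(1,3) finite_subset by blast
  have "Max (rank E lt ` D) \<in> rank E lt ` D" using finD assms(4) by simp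
  then obtain e where e: "e \<in> D" "rank E lt e = Max (rank E lt ` D)" by (metis imageE)
  have "lt f e" if f: "f \<in> D" "f \<noteq> e" for f
  proof (rule ccontr)
    assume "\<not> lt f e"
    then have "lt e f" using f e(1) assms(2,3) unfolding strict_total_order_on_def by blast
    then have "rank E lt e < rank E lt f" using f(1) e(1) assms(3) rank_less[OF assms(1,2)] by blast
    moreover have "rank E lt f \<le> Max (rank E lt ` D)" using finD f(1) by simp
    ultimately show False using e(2) by simp
  qed
  then show ?thesis using that e by blast
qed

(* if R1 ~ R2 differ and the largest edge of the difference set is reversed in R1,
   that edge lies on a directed cycle of R1 made of smaller edges, so R1 is not reduced *)
lemma reduced_difference:
  assumes g: "graph V E ends"
    and eq: "eulerian_equiv V E ends R1 R2" and red: "reduced E ends lt R1"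
    and D_def: "D = {f\<in>E. (f \<in> R1) \<noteq> (f \<in> R2)}"
    and eD: "e \<in> D" and largest: "\<forall>f\<in>D. f \<noteq> e \<longrightarrow> lt f e"
  shows "e \<notin> R1"
proof
  assume eR1: "e \<in> R1"
  have finV: "finite V" and finE: "finite E" using g unfolding graph_def by auto
  have DE: "D \<subseteq> E" and finD: "finite D" using finE unfolding D_def by auto
  have inV: "\<forall>f\<in>D. fst (arc ends R1 f) \<in> V \<and> snd (arc ends R1 f) \<in> V"
    using g DE unfolding graph_def arc_def by auto
  have bal: "\<forall>v\<in>V. card {f\<in>D. fst (arc ends R1 f) = v} = card {f\<in>D. snd (arc ends R1 f) = v}"
    using eq unfolding eulerian_equiv_def Let_def D_def by simp
  obtain es where es: "es \<noteq> []" "set es \<subseteq> D" "distinct es"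
      "distinct (map (\<lambda>f. fst (arc ends R1 f)) es)"
      "\<forall>i<length es. snd (arc ends R1 (es ! i)) = fst (arc ends R1 (es ! ((i + 1) mod length es)))"
      "e \<in> set es"
    using balanced_cycle[OF finV finD inV bal eD] by blast
  then have "dcycle E ends R1 es" using DE unfolding dcycle_def by auto
  moreover have "\<forall>f\<in>set es. f \<noteq> e \<longrightarrow> lt f e" using es(2) largest by blast
  ultimately show False using red eR1 eD DE es(6) unfolding reduced_def by blast
qed

lemma reduced_unique:
  assumes g: "graph V E ends" and sto: "strict_total_order_on E lt"
    and R1: "R1 \<subseteq> E" "reduced E ends lt R1" and R2: "R2 \<subseteq> E" "reduced E ends lt R2"
    and eq: "eulerian_equiv V E ends R1 R2"
  shows "R1 = R2"
proof (rule ccontr)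
  assume "R1 \<noteq> R2"
  define D where "D = {f\<in>E. (f \<in> R1) \<noteq> (f \<in> R2)}"
  have finE: "finite E" using g unfolding graph_def by simp
  obtain x where x: "(x \<in> R1) \<noteq> (x \<in> R2)" using \<open>R1 \<noteq> R2\<close> by (auto simp: set_eq_iff)
  then have "x \<in> D" using R1(1) R2(1) unfolding D_def by blast
  moreover have "D \<subseteq> E" unfolding D_def by blast
  ultimately obtain e where e: "e \<in> D" "\<forall>f\<in>D. f \<noteq> e \<longrightarrow> lt f e"
    using largest_element[OF finE sto] by blast
  have D_sym: "D = {f\<in>E. (f \<in> R2) \<noteq> (f \<in> R1)}" unfolding D_def by blast
  have "e \<notin> R1" using reduced_difference[OF g eq R1(2) D_def e] .
  moreover have "e \<notin> R2"
    using reduced_difference[OF g eulerian_equiv_sym[OF finE eq] R2(2) D_sym e] .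
  ultimately show False using e(1) unfolding D_def by blast
qed

theorem lemma1:
  fixes V :: "'v set" and E :: "'e set" and ends :: "'e \<Rightarrow> 'v \<times> 'v"
    and lt :: "'e \<Rightarrow> 'e \<Rightarrow> bool"
  assumes "graph V E ends"
    and "connected_graph V E ends"
    and "strict_total_order_on E lt"
    and "R \<in> BO V E ends"
  shows "\<exists>!R'. R' \<in> BO V E ends \<and> eulerian_equiv V E ends R R' \<and> reduced E ends lt R'"
proof (rule ex_ex1I)
  show "\<exists>R'. R' \<in> BO V E ends \<and> eulerian_equiv V E ends R R' \<and> reduced E ends lt R'"
    using reduced_exists[OF assms(1,3,4)] .
next
  fix R1 R2
  assume R1: "R1 \<in> BO V E ends \<and> eulerian_equiv V E ends R R1 \<and> reduced E ends lt R1"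
    and R2: "R2 \<in> BO V E ends \<and> eulerian_equiv V E ends R R2 \<and> reduced E ends lt R2"
  have finE: "finite E" using assms(1) unfolding graph_def by simp
  have "eulerian_equiv V E ends R1 R" using eulerian_equiv_sym[OF finE] R1 by blast
  then have "eulerian_equiv V E ends R1 R2" using eulerian_equiv_trans[OF finE] R2 by blast
  moreover have "R1 \<subseteq> E" "R2 \<subseteq> E" using R1 R2 unfolding BO_def orientations_def by auto
  ultimately show "R1 = R2" using reduced_unique[OF assms(1,3)] R1 R2 by blast
qed

end
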